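(* Let $n,m$ be positive integers, $A\in\mathbb{R}^{n\times n}$, $B\in\mathbb{R}^{m\times n}$, and let $p:\mathbb{R}^n_+\to\mathbb{R}^n_+$, $c:\mathbb{R}^n_+\to\mathbb{R}^n_+$, $r:\mathbb{R}^m_+\to\mathbb{R}^m_+$ be maps. Put $\Omega=\mathbb{R}^n_+\times\mathbb{R}^n_+\times\mathbb{R}^m_+$ and define $g:\Omega\to\mathbb{R}^{2n+m}$ by $$g(x,\lambda,v)=\big((I-A)^T\lambda-p(x)-B^Tv;\ c(\lambda)-(I-A)x;\ Bx-r(v)\big).$$ For $y^*=(x^*,\lambda^*,v^* )\in\Omega$ the following are equivalent: (i) $x^*\in\operatorname{argmin}\{\langle p(x^* ),X\rangle : (I-A)X\ge c(\lambda^* ),\ BX\le r(v^* ),\ X\in\mathbb{R}^n_+\}$ and $(\lambda^*,v^* )\in\operatorname{argmax}\{\langle c(\lambda^* ),\Lambda\rangle-\langle r(v^* ),V\rangle : (I-A)^T\Lambda-B^TV\le p(x^* ),\ \Lambda\in\mathbb{R}^n_+,\ V\in\mathbb{R}^m_+\}$; (ii) $\langle g(y^* ),y-y^*\rangle\le 0$ for all $y\in\Omega$.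
   Context: Standing assumptions of the paper: $A$ (the balance matrix) has no zero rows and columns and is productive, i.e. for every $c\in\mathbb{R}^n_+$ the system $x-Ax=c$ has a solution $x\in\mathbb{R}^n_+$; $B$ (the technological matrix) has no zero row and no zero column. Vector inequalities are componentwise and $\langle\cdot,\cdot\rangle$ is the Euclidean inner product. A triple $y^*$ satisfying (i) is called a nonlinear production–consumption equilibrium (NPCE). *)

theory Defs
  imports "HOL-Analysis.Analysis"
begin

(* vector inequalities on real^'n are componentwise (library instance of ord for vec) *)

definition no_zero_rows :: "real^'n^'m \<Rightarrow> bool" where
  "no_zero_rows M \<longleftrightarrow> (\<forall>i. \<exists>j. M $ i $ j \<noteq> 0)"

definition no_zero_cols :: "real^'n^'m \<Rightarrow> bool" where
  "no_zero_cols M \<longleftrightarrow> (\<forall>j. \<exists>i. M $ i $ j \<noteq> 0)"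

definition productive :: "real^'n^'n \<Rightarrow> bool" where
  "productive A \<longleftrightarrow> (\<forall>c::real^'n. c \<ge> 0 \<longrightarrow> (\<exists>x. x \<ge> 0 \<and> x - A *v x = c))"

definition g_map ::
  "real^'n^'n \<Rightarrow> real^'n^'m \<Rightarrow> (real^'n \<Rightarrow> real^'n) \<Rightarrow> (real^'n \<Rightarrow> real^'n) \<Rightarrow>
   (real^'m \<Rightarrow> real^'m) \<Rightarrow> real^'n \<Rightarrow> real^'n \<Rightarrow> real^'m \<Rightarrow> (real^'n) \<times> (real^'n) \<times> (real^'m)"
  where
  "g_map A B p c r x lam v =
     (transpose (mat 1 - A) *v lam - p x - transpose B *v v,
      c lam - (mat 1 - A) *v x,
      B *v x - r v)"

(* Euclidean inner product on R^n \<times> R^n \<times> R^m = R^(2n+m) *)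
definition inner3 :: "(real^'n) \<times> (real^'n) \<times> (real^'m) \<Rightarrow> (real^'n) \<times> (real^'n) \<times> (real^'m) \<Rightarrow> real" where
  "inner3 a b = (fst a \<bullet> fst b) + (fst (snd a) \<bullet> fst (snd b)) + (snd (snd a) \<bullet> snd (snd b))"

end

theory Submission
  imports Defs
begin

(* Condition (i) says that xs and (lams, vs) are optimal solutions of a pair of mutually dual
   linear programs whose data p xs, c lams, r vs are frozen at the given point.  By LP duality
   this holds iff both points are feasible and the duality gap vanishes, i.e. iff complementary
   slackness holds.  The three blocks of g are the negated slacks of the two programs, and
   complementary slackness says precisely that each block lies in the normal cone of the
   nonnegative orthant at the corresponding component of (xs, lams, vs), which is condition (ii).
   Strong duality comes from the Farkas lemma: a point outside a finitely generated (hence closed)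
   cone can be separated from it. *)

lemma inner_nonneg_vec:
  fixes a b :: "real^'n"
  shows "0 \<le> a \<Longrightarrow> 0 \<le> b \<Longrightarrow> 0 \<le> a \<bullet> b"
  by (auto simp: inner_vec_def less_eq_vec_def intro!: sum_nonneg)

lemma inner_vector_matrix: "(x::real^'n) \<bullet> (y v* M) = y \<bullet> (M *v x)"
  by (metis dot_lmul_matrix inner_commute)

lemma transpose_mult_axis: "transpose M *v axis i (1::real) = (M :: real^'n^'k) $ i"
  by (auto simp: vec_eq_iff vector_matrix_mult_def axis_def if_distrib[of "\<lambda>a. a * _"]
      cong: if_cong)

lemma normal_cone_nonneg_orthant_iff:
  fixes d xs :: "real^'n"
  assumes "0 \<le> xs"
  shows "(\<forall>x \<ge> 0. d \<bullet> (x - xs) \<le> 0) \<longleftrightarrow> d \<le> 0 \<and> d \<bullet> xs = 0"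
proof
  assume normal: "\<forall>x \<ge> 0. d \<bullet> (x - xs) \<le> 0"
  have "d $ i \<le> 0" for i
  proof -
    have "0 \<le> xs + axis i 1"
      using assms by (simp add: less_eq_vec_def axis_def)
    then have "d \<bullet> (xs + axis i 1 - xs) \<le> 0"
      using normal by blast
    then show ?thesis
      by (simp add: inner_axis)
  qed
  moreover have "0 \<le> xs + xs"
    using assms by (simp add: less_eq_vec_def)
  then have "d \<bullet> (0 - xs) \<le> 0" "d \<bullet> (xs + xs - xs) \<le> 0"
    using normal by blast+
  ultimately show "d \<le> 0 \<and> d \<bullet> xs = 0"
    by (simp add: less_eq_vec_def)
next
  assume "d \<le> 0 \<and> d \<bullet> xs = 0"
  then have "d \<bullet> (x - xs) \<le> 0" if "0 \<le> x" for x
    using inner_nonneg_vec[of "- d" x] that by (simp add: inner_diff_right less_eq_vec_def)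
  then show "\<forall>x \<ge> 0. d \<bullet> (x - xs) \<le> 0"
    by blast
qed

lemma normal_cone_nonneg_orthant_product_iff:
  fixes d xs :: "real^'a" and e lams :: "real^'b" and f vs :: "real^'c"
  assumes "0 \<le> xs" "0 \<le> lams" "0 \<le> vs"
  shows "(\<forall>x lam v. 0 \<le> x \<and> 0 \<le> lam \<and> 0 \<le> v \<longrightarrow>
            d \<bullet> (x - xs) + e \<bullet> (lam - lams) + f \<bullet> (v - vs) \<le> 0)
    \<longleftrightarrow> (d \<le> 0 \<and> d \<bullet> xs = 0) \<and> (e \<le> 0 \<and> e \<bullet> lams = 0) \<and> (f \<le> 0 \<and> f \<bullet> vs = 0)"
    (is "?product \<longleftrightarrow> _")
proof -
  have "?product \<longleftrightarrow> (\<forall>x \<ge> 0. d \<bullet> (x - xs) \<le> 0) \<and> (\<forall>lam \<ge> 0. e \<bullet> (lam - lams) \<le> 0)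
      \<and> (\<forall>v \<ge> 0. f \<bullet> (v - vs) \<le> 0)"
  proof
    assume product: ?product
    have "d \<bullet> (x - xs) \<le> 0" "e \<bullet> (x' - lams) \<le> 0" "f \<bullet> (x'' - vs) \<le> 0"
      if "0 \<le> x" "0 \<le> x'" "0 \<le> x''" for x x' x''
      using product[rule_format, of x lams vs] product[rule_format, of xs x' vs]
        product[rule_format, of xs lams x''] that assms
      by simp_all
    then show "(\<forall>x \<ge> 0. d \<bullet> (x - xs) \<le> 0) \<and> (\<forall>lam \<ge> 0. e \<bullet> (lam - lams) \<le> 0)
      \<and> (\<forall>v \<ge> 0. f \<bullet> (v - vs) \<le> 0)"
      using assms by blast
  qed (simp add: add_nonpos_nonpos)
  then show ?thesis
    using assms by (simp add: normal_cone_nonneg_orthant_iff)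
qed

lemma finite_cone_separation:
  fixes S :: "'a::euclidean_space set"
  assumes "finite S" and "b \<notin> convex_cone hull S"
  obtains a where "\<And>s. s \<in> S \<Longrightarrow> 0 \<le> a \<bullet> s" and "a \<bullet> b < 0"
proof -
  obtain a \<beta> where ab: "a \<bullet> b < \<beta>"
    and hull_above: "\<And>x. x \<in> convex_cone hull S \<Longrightarrow> \<beta> < a \<bullet> x"
    using separating_hyperplane_closed_point[OF convex_convex_cone_hull
        closed_convex_cone_hull[OF \<open>finite S\<close>] assms(2)]
    by blast
  have "\<beta> < 0"
    using hull_above[OF convex_cone_hull_contains_0] by simp
  have "0 \<le> a \<bullet> s" if "s \<in> S" for s
  proof (rule ccontr)
    assume "\<not> 0 \<le> a \<bullet> s"
    then have "0 \<le> \<beta> / (a \<bullet> s)"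
      using \<open>\<beta> < 0\<close> by (simp add: divide_nonpos_neg)
    then have "(\<beta> / (a \<bullet> s)) *\<^sub>R s \<in> convex_cone hull S"
      using that by (simp add: convex_cone_hull_mul hull_inc)
    then show False
      using hull_above \<open>\<not> 0 \<le> a \<bullet> s\<close> by fastforce
  qed
  then show thesis
    using that ab \<open>\<beta> < 0\<close> by fastforce
qed

definition lp_primal_feasible ::
  "real^'n^'k \<Rightarrow> real^'n^'m \<Rightarrow> real^'k \<Rightarrow> real^'m \<Rightarrow> real^'n \<Rightarrow> bool" where
  "lp_primal_feasible M B C R X \<longleftrightarrow> M *v X \<ge> C \<and> B *v X \<le> R \<and> X \<ge> 0"

definition lp_dual_feasible ::
  "real^'n^'k \<Rightarrow> real^'n^'m \<Rightarrow> real^'n \<Rightarrow> real^'k \<Rightarrow> real^'m \<Rightarrow> bool" where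
  "lp_dual_feasible M B P L V \<longleftrightarrow> transpose M *v L - transpose B *v V \<le> P \<and> L \<ge> 0 \<and> V \<ge> 0"

lemma lp_duality_gap:
  fixes M :: "real^'n^'k" and B :: "real^'n^'m"
  shows "P \<bullet> X - (C \<bullet> L - R \<bullet> V) =
    (P - (transpose M *v L - transpose B *v V)) \<bullet> X + (M *v X - C) \<bullet> L + (R - B *v X) \<bullet> V"
  by (simp add: inner_diff_left inner_diff_right inner_vector_matrix inner_commute)

lemma lp_weak_duality:
  assumes "lp_primal_feasible M B C R X" and "lp_dual_feasible M B P L V"
  shows "C \<bullet> L - R \<bullet> V \<le> P \<bullet> X"
proof -
  have "0 \<le> (P - (transpose M *v L - transpose B *v V)) \<bullet> X + (M *v X - C) \<bullet> L + (R - B *v X) \<bullet> V"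
    using assms unfolding lp_primal_feasible_def lp_dual_feasible_def
    by (intro add_nonneg_nonneg inner_nonneg_vec) (simp_all del: transpose_matrix_vector)
  then show ?thesis
    by (simp only: lp_duality_gap[symmetric])
qed

lemma lp_dual_feasible_add:
  assumes "lp_dual_feasible M B w L V" and "lp_dual_feasible M B w' L' V'"
  shows "lp_dual_feasible M B (w + w') (L + L') (V + V')"
  using assms unfolding lp_dual_feasible_def less_eq_vec_def
  by (simp add: matrix_vector_right_distrib del: transpose_matrix_vector) (smt (verit))

lemma lp_dual_feasible_scaleR:
  assumes "lp_dual_feasible M B w L V" and "0 \<le> t"
  shows "lp_dual_feasible M B (t *\<^sub>R w) (t *\<^sub>R L) (t *\<^sub>R V)"
  using assms unfolding lp_dual_feasible_def less_eq_vec_def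
  by (simp add: matrix_vector_mult_scaleR mult_left_mono flip: right_diff_distrib
      del: transpose_matrix_vector)

lemma convex_cone_lp_dual_bounds:
  "convex_cone {(w, z). \<exists>L V. lp_dual_feasible M B w L V \<and> z \<le> C \<bullet> L - R \<bullet> V}"
  (is "convex_cone ?K")
  unfolding convex_cone_iff
proof (intro conjI ballI allI impI)
  show "0 \<in> ?K"
    by (auto simp: lp_dual_feasible_def zero_prod_def intro!: exI[of _ 0])
next
  fix x y
  assume "x \<in> ?K" "y \<in> ?K"
  then obtain w z L V w' z' L' V' where "x = (w, z)" "y = (w', z')"
    "lp_dual_feasible M B w L V" "z \<le> C \<bullet> L - R \<bullet> V"
    "lp_dual_feasible M B w' L' V'" "z' \<le> C \<bullet> L' - R \<bullet> V'"
    by auto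
  then show "x + y \<in> ?K"
    by (auto simp: inner_add_right intro!: exI[of _ "L + L'"] exI[of _ "V + V'"] lp_dual_feasible_add)
next
  fix x and t :: real
  assume "x \<in> ?K" "0 \<le> t"
  then obtain w z L V where "x = (w, z)" "lp_dual_feasible M B w L V" "z \<le> C \<bullet> L - R \<bullet> V"
    by auto
  then show "t *\<^sub>R x \<in> ?K"
    using \<open>0 \<le> t\<close>
    by (auto simp: right_diff_distrib[symmetric] mult_left_mono
        intro!: exI[of _ "t *\<^sub>R L"] exI[of _ "t *\<^sub>R V"] lp_dual_feasible_scaleR)
qed

(* (y, \<sigma>) is a homogenised primal point: for \<sigma> > 0 the point y /\<^sub>R \<sigma> is feasible,
   for \<sigma> = 0 the vector y is a recession direction of the feasible set. *)
lemma lp_primal_improving_direction: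
  assumes xs: "lp_primal_feasible M B C R xs"
    and dir: "\<sigma> *\<^sub>R C \<le> M *v y" "B *v y \<le> \<sigma> *\<^sub>R R" "0 \<le> y" "0 \<le> \<sigma>"
    and descent: "P \<bullet> y < \<sigma> * (P \<bullet> xs)"
  obtains X where "lp_primal_feasible M B C R X" and "P \<bullet> X < P \<bullet> xs"
proof (cases "\<sigma> = 0")
  case True
  then have "lp_primal_feasible M B C R (xs + y)"
    using xs dir
    by (simp add: lp_primal_feasible_def matrix_vector_right_distrib less_eq_vec_def
        add_increasing2 add_decreasing2)
  moreover have "P \<bullet> (xs + y) < P \<bullet> xs"
    using descent True by (simp add: inner_add_right)
  ultimately show thesis by (rule that)
next
  case False
  then have "0 < \<sigma>" using dir(4) by simp
  have "lp_primal_feasible M B C R (inverse \<sigma> *\<^sub>R y)"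
    using dir \<open>0 < \<sigma>\<close>
    by (auto simp: lp_primal_feasible_def less_eq_vec_def matrix_vector_mult_scaleR field_simps)
  moreover have "P \<bullet> (inverse \<sigma> *\<^sub>R y) < P \<bullet> xs"
    using descent \<open>0 < \<sigma>\<close> by (simp add: field_simps)
  ultimately show thesis by (rule that)
qed

lemma lp_strong_duality:
  fixes M :: "real^'n^'k" and B :: "real^'n^'m"
  assumes opt: "is_arg_min (\<lambda>X. P \<bullet> X) (lp_primal_feasible M B C R) xs"
  obtains L V where "lp_dual_feasible M B P L V" and "P \<bullet> xs \<le> C \<bullet> L - R \<bullet> V"
proof -
  define K where "K = {(w, z). \<exists>L V. lp_dual_feasible M B w L V \<and> z \<le> C \<bullet> L - R \<bullet> V}"
  define S :: "((real^'n) \<times> real) set" where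
    "S = range (\<lambda>i. (M $ i, C $ i)) \<union> range (\<lambda>j. (- B $ j, - R $ j))
       \<union> range (\<lambda>k. (axis k 1, 0)) \<union> {(0, -1)}"
  have axis_nonneg: "0 \<le> (axis i 1 :: real^'a)" for i
    by (simp add: less_eq_vec_def axis_def)
  have "(M $ i, C $ i) \<in> K" for i
    unfolding K_def lp_dual_feasible_def mem_Collect_eq prod.case
    by (intro exI[of _ "axis i 1"] exI[of _ 0])
      (simp add: axis_nonneg transpose_mult_axis inner_axis del: transpose_matrix_vector)
  moreover have "(- B $ j, - R $ j) \<in> K" for j
    unfolding K_def lp_dual_feasible_def mem_Collect_eq prod.case
    by (intro exI[of _ 0] exI[of _ "axis j 1"])
      (simp add: axis_nonneg transpose_mult_axis inner_axis del: transpose_matrix_vector)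
  moreover have "(axis k 1, 0) \<in> K" "(0, -1) \<in> K" for k
    unfolding K_def lp_dual_feasible_def using axis_nonneg
    by (auto intro!: exI[of _ 0])
  ultimately have S_K: "S \<subseteq> K"
    unfolding S_def by blast
  have "finite S"
    unfolding S_def by simp
  have hull_K: "convex_cone hull S \<subseteq> K"
    using S_K unfolding K_def by (intro hull_minimal convex_cone_lp_dual_bounds)
  \<comment> \<open>A vector separating (P, P \<bullet> xs) from the cone generated by S, read off on the
    generators, is a homogenised primal point improving on xs.\<close>
  have "(P, P \<bullet> xs) \<in> convex_cone hull S"
  proof (rule ccontr)
    assume "(P, P \<bullet> xs) \<notin> convex_cone hull S"
    then obtain y \<tau> where sep: "\<And>s. s \<in> S \<Longrightarrow> 0 \<le> (y, \<tau>) \<bullet> s"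
      and descent: "(y, \<tau>) \<bullet> (P, P \<bullet> xs) < 0"
      using finite_cone_separation[OF \<open>finite S\<close>] by (metis surj_pair)
    have "- \<tau> * C $ i \<le> (M *v y) $ i" for i
      using sep[of "(M $ i, C $ i)"] by (simp add: S_def matrix_vector_mul_component inner_commute)
    moreover have "(B *v y) $ j \<le> - \<tau> * R $ j" for j
      using sep[of "(- B $ j, - R $ j)"] by (simp add: S_def matrix_vector_mul_component inner_commute)
    moreover have "0 \<le> y $ k" for k
      using sep[of "(axis k 1, 0)"] by (simp add: S_def inner_axis)
    ultimately have "(- \<tau>) *\<^sub>R C \<le> M *v y" "B *v y \<le> (- \<tau>) *\<^sub>R R" "0 \<le> y"
      by (simp_all add: less_eq_vec_def)
    moreover have "0 \<le> - \<tau>"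
      using sep[of "(0, -1)"] by (simp add: S_def)
    moreover have "P \<bullet> y < (- \<tau>) * (P \<bullet> xs)"
      using descent by (simp add: inner_commute)
    moreover have "lp_primal_feasible M B C R xs"
      using opt by (simp add: is_arg_min_def)
    ultimately obtain X where "lp_primal_feasible M B C R X" "P \<bullet> X < P \<bullet> xs"
      by (metis lp_primal_improving_direction)
    with opt show False
      by (simp add: is_arg_min_def)
  qed
  with hull_K show thesis
    unfolding K_def using that by blast
qed

lemma lp_optimal_pair_iff_equal_values:
  fixes M :: "real^'n^'k" and B :: "real^'n^'m"
  shows "is_arg_min (\<lambda>X. P \<bullet> X) (lp_primal_feasible M B C R) xs
      \<and> is_arg_max (\<lambda>(L, V). C \<bullet> L - R \<bullet> V) (\<lambda>(L, V). lp_dual_feasible M B P L V) (lams, vs)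
    \<longleftrightarrow> lp_primal_feasible M B C R xs \<and> lp_dual_feasible M B P lams vs
      \<and> P \<bullet> xs = C \<bullet> lams - R \<bullet> vs"
    (is "?optimal \<longleftrightarrow> ?primal \<and> ?dual \<and> _")
proof
  assume opt: ?optimal
  then have ?primal ?dual
    by (simp_all add: is_arg_min_def is_arg_max_def)
  moreover obtain L V where "lp_dual_feasible M B P L V" "P \<bullet> xs \<le> C \<bullet> L - R \<bullet> V"
    using lp_strong_duality opt by blast
  moreover have "C \<bullet> L - R \<bullet> V \<le> C \<bullet> lams - R \<bullet> vs" if "lp_dual_feasible M B P L V" for L V
    using opt that by (auto simp: is_arg_max_def not_less)
  ultimately show "?primal \<and> ?dual \<and> P \<bullet> xs = C \<bullet> lams - R \<bullet> vs"
    using lp_weak_duality by (metis order_antisym order_trans)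
next
  assume "?primal \<and> ?dual \<and> P \<bullet> xs = C \<bullet> lams - R \<bullet> vs"
  then show ?optimal
    using lp_weak_duality unfolding is_arg_min_def is_arg_max_def
    by (fastforce simp: not_less)
qed

lemma lp_optimal_pair_iff_complementary_slackness:
  fixes M :: "real^'n^'k" and B :: "real^'n^'m"
    and P :: "real^'n" and C :: "real^'k" and R :: "real^'m"
  assumes nonneg: "0 \<le> xs" "0 \<le> lams" "0 \<le> vs"
  defines "d \<equiv> transpose M *v lams - P - transpose B *v vs"
    and "e \<equiv> C - M *v xs"
    and "f \<equiv> B *v xs - R"
  shows "lp_primal_feasible M B C R xs \<and> lp_dual_feasible M B P lams vs
      \<and> P \<bullet> xs = C \<bullet> lams - R \<bullet> vs
    \<longleftrightarrow> (d \<le> 0 \<and> d \<bullet> xs = 0) \<and> (e \<le> 0 \<and> e \<bullet> lams = 0) \<and> (f \<le> 0 \<and> f \<bullet> vs = 0)"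
proof -
  have feasible_iff: "lp_primal_feasible M B C R xs \<and> lp_dual_feasible M B P lams vs
      \<longleftrightarrow> d \<le> 0 \<and> e \<le> 0 \<and> f \<le> 0"
    using nonneg unfolding lp_primal_feasible_def lp_dual_feasible_def d_def e_def f_def
    by (auto simp: less_eq_vec_def algebra_simps simp del: transpose_matrix_vector)
  have "- d = P - (transpose M *v lams - transpose B *v vs)" "- e = M *v xs - C" "- f = R - B *v xs"
    unfolding d_def e_def f_def by (simp_all del: transpose_matrix_vector)
  then have gap: "P \<bullet> xs - (C \<bullet> lams - R \<bullet> vs) = (- d) \<bullet> xs + (- e) \<bullet> lams + (- f) \<bullet> vs"
    by (simp only: lp_duality_gap)
  have "0 \<le> (- d) \<bullet> xs" "0 \<le> (- e) \<bullet> lams" "0 \<le> (- f) \<bullet> vs" if "d \<le> 0" "e \<le> 0" "f \<le> 0"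
    using that nonneg by (intro inner_nonneg_vec; simp add: less_eq_vec_def)+
  then show ?thesis
    using feasible_iff gap by auto
qed

theorem theorem1:
  fixes A :: "real^'n^'n" and B :: "real^'n^'m"
    and p c :: "real^'n \<Rightarrow> real^'n" and r :: "real^'m \<Rightarrow> real^'m"
    and xs lams :: "real^'n" and vs :: "real^'m"
  assumes A_rows: "no_zero_rows A" and A_cols: "no_zero_cols A"
    and A_prod: "productive A"
    and B_rows: "no_zero_rows B" and B_cols: "no_zero_cols B"
    and p_nonneg: "\<And>x. x \<ge> 0 \<Longrightarrow> p x \<ge> 0"
    and c_nonneg: "\<And>x. x \<ge> 0 \<Longrightarrow> c x \<ge> 0"
    and r_nonneg: "\<And>v. v \<ge> 0 \<Longrightarrow> r v \<ge> 0"
    and ys_in: "xs \<ge> 0" "lams \<ge> 0" "vs \<ge> 0"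
  shows "(is_arg_min (\<lambda>X. p xs \<bullet> X)
            (\<lambda>X. (mat 1 - A) *v X \<ge> c lams \<and> B *v X \<le> r vs \<and> X \<ge> 0) xs
          \<and> is_arg_max (\<lambda>(L, V). c lams \<bullet> L - r vs \<bullet> V)
            (\<lambda>(L, V). transpose (mat 1 - A) *v L - transpose B *v V \<le> p xs \<and> L \<ge> 0 \<and> V \<ge> 0)
            (lams, vs))
     \<longleftrightarrow>
         (\<forall>x lam v. x \<ge> 0 \<and> lam \<ge> 0 \<and> v \<ge> 0 \<longrightarrow>
            inner3 (g_map A B p c r xs lams vs) (x - xs, lam - lams, v - vs) \<le> 0)"
proof -
  have "inner3 (g_map A B p c r xs lams vs) (x - xs, lam - lams, v - vs)
      = (transpose (mat 1 - A) *v lams - p xs - transpose B *v vs) \<bullet> (x - xs)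
        + (c lams - (mat 1 - A) *v xs) \<bullet> (lam - lams) + (B *v xs - r vs) \<bullet> (v - vs)" for x lam v
    by (simp add: inner3_def g_map_def del: transpose_matrix_vector)
  then show ?thesis
    using lp_optimal_pair_iff_equal_values[where M = "mat 1 - A" and P = "p xs"
        and C = "c lams" and R = "r vs"]
      lp_optimal_pair_iff_complementary_slackness[OF ys_in, where M = "mat 1 - A" and P = "p xs"
        and B = B and C = "c lams" and R = "r vs"]
      normal_cone_nonneg_orthant_product_iff[OF ys_in]
    unfolding lp_primal_feasible_def lp_dual_feasible_def
    by presburger
qed

end
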